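(* Let $\mathcal{H}_A$ and $\mathcal{H}_B$ be finite-dimensional Hilbert spaces. On $\mathcal{H}_A$ let $X_A=\{e^A_i\}$ and $Y_A=\{f^A_j\}$ be two orthonormal bases, and on $\mathcal{H}_B$ let $X_B=\{e^B_k\}$ and $Y_B=\{f^B_l\}$ be two orthonormal bases. Let $X_{AB}=\{e^A_i\otimes e^B_k\}_{i,k}$ and $Y_{AB}=\{f^A_j\otimes f^B_l\}_{j,l}$ be the corresponding product bases of $\mathcal{H}_A\otimes\mathcal{H}_B$. Fix weights $\lambda,\mu>0$, and suppose $c_A(\lambda,\mu),c_B(\lambda,\mu)\in\mathbb{R}$ satisfy $$\lambda H(X_A|\rho_A)+\mu H(Y_A|\rho_A)\ge c_A(\lambda,\mu)\quad\text{for all density matrices }\rho_A \text{ on }\mathcal{H}_A,$$ $$\lambda H(X_B|\rho_B)+\mu H(Y_B|\rho_B)\ge c_B(\lambda,\mu)\quad\text{for all density matrices }\rho_B \text{ on }\mathcal{H}_B.$$ Then $$\lambda H(X_{AB}|\rho_{AB})+\mu H(Y_{AB}|\rho_{AB})\ge c_A(\lambda,\mu)+c_B(\lambda,\mu)$$ for all density matrices $\rho_{AB}$ on $\mathcal{H}_A\otimes\mathcal{H}_B$. Moreover, if $c_A(\lambda,\mu)$ and $c_B(\lambda,\mu)$ are the optimal (largest possible) such constants, i.e. $c_A(\lambda,\mu)=\inf_{\rho_A}[\lambda H(X_A|\rho_A)+\mu H(Y_A|\rho_A)]$ and likewise for $B$, then $$\inf_{\rho_{AB}}\big[\lambda H(X_{AB}|\rho_{AB})+\mu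 H(Y_{AB}|\rho_{AB})\big]=c_A(\lambda,\mu)+c_B(\lambda,\mu).$$
   Context: A density matrix is a positive semidefinite operator of trace one. For an orthonormal basis $X=\{e_i\}$ of a finite-dimensional Hilbert space and a density matrix $\rho$, the outcome distribution is $p_i=\langle e_i|\rho|e_i\rangle$ and $H(X|\rho):=-\sum_i p_i\log p_i$ (Shannon entropy, with $0\log 0=0$ and a fixed logarithm base $>1$). *)

theory Defs
  imports Complex_Main
begin

text \<open>A finite-dimensional Hilbert space is modelled as the space of functions
  'n \<Rightarrow> complex over a finite index type 'n, with inner product
  <u,v> = sum over x of cnj (u x) * v x.\<close>

definition cinner_fun :: "('n::finite \<Rightarrow> complex) \<Rightarrow> ('n \<Rightarrow> complex) \<Rightarrow> complex" where
  "cinner_fun u v = (\<Sum>x\<in>UNIV. cnj (u x) * v x)"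

definition apply_op :: "('n::finite \<Rightarrow> 'n \<Rightarrow> complex) \<Rightarrow> ('n \<Rightarrow> complex) \<Rightarrow> ('n \<Rightarrow> complex)" where
  "apply_op \<rho> v = (\<lambda>x. \<Sum>y\<in>UNIV. \<rho> x y * v y)"

definition density :: "('n::finite \<Rightarrow> 'n \<Rightarrow> complex) \<Rightarrow> bool" where
  "density \<rho> \<longleftrightarrow>
     (\<forall>x y. \<rho> y x = cnj (\<rho> x y)) \<and>
     (\<forall>v. Im (cinner_fun v (apply_op \<rho> v)) = 0 \<and> 0 \<le> Re (cinner_fun v (apply_op \<rho> v))) \<and>
     (\<Sum>x\<in>UNIV. \<rho> x x) = 1"

text \<open>Orthonormal basis e = {e i}, indexed by the index type itself
  (an orthonormal family with dim-many vectors).\<close>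
definition onb :: "('n::finite \<Rightarrow> 'n \<Rightarrow> complex) \<Rightarrow> bool" where
  "onb e \<longleftrightarrow> (\<forall>i j. cinner_fun (e i) (e j) = (if i = j then 1 else 0))"

definition outcome_prob :: "('n::finite \<Rightarrow> 'n \<Rightarrow> complex) \<Rightarrow> ('n \<Rightarrow> 'n \<Rightarrow> complex) \<Rightarrow> 'n \<Rightarrow> real" where
  "outcome_prob e \<rho> i = Re (cinner_fun (e i) (apply_op \<rho> (e i)))"

definition meas_entropy :: "real \<Rightarrow> ('n::finite \<Rightarrow> 'n \<Rightarrow> complex) \<Rightarrow> ('n \<Rightarrow> 'n \<Rightarrow> complex) \<Rightarrow> real" where
  "meas_entropy b e \<rho> =
     - (\<Sum>i\<in>UNIV. (let p = outcome_prob e \<rho> i in if p = 0 then 0 else p * log b p))"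

text \<open>Product basis {e_i (x) f_k} of H_A (x) H_B, with H_A (x) H_B = functions on 'a \<times> 'b.\<close>
definition tensor_basis :: "('a::finite \<Rightarrow> 'a \<Rightarrow> complex) \<Rightarrow> ('b::finite \<Rightarrow> 'b \<Rightarrow> complex)
    \<Rightarrow> ('a \<times> 'b) \<Rightarrow> ('a \<times> 'b) \<Rightarrow> complex" where
  "tensor_basis e f = (\<lambda>(i, k) (x, y). e i x * f k y)"

end

theory Submission
  imports Defs "HOL-Analysis.Cartesian_Space"
begin

text \<open>Conditioning \<open>\<rho>\<^sub>A\<^sub>B\<close> on the outcome \<open>i\<close> of \<open>X\<^sub>A\<close> leaves an unnormalised state of
  \<open>\<H>\<^sub>B\<close> of weight \<open>t\<^sub>i\<close>, to which the relation for \<open>B\<close> applies.  Averaging over \<open>i\<close> yields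
  \<open>c\<^sub>B \<le> \<lambda> (H(X\<^sub>AX\<^sub>B) - H(X\<^sub>A)) + \<mu> (H(X\<^sub>AY\<^sub>B) - H(X\<^sub>A))\<close>, and conditioning on \<open>Y\<^sub>B\<close>
  instead yields \<open>c\<^sub>A \<le> \<lambda> (H(X\<^sub>AY\<^sub>B) - H(Y\<^sub>B)) + \<mu> (H(Y\<^sub>AY\<^sub>B) - H(Y\<^sub>B))\<close>.  Adding the two, the
  mixed terms cancel up to \<open>(\<lambda> + \<mu>) (H(X\<^sub>AY\<^sub>B) - H(X\<^sub>A) - H(Y\<^sub>B))\<close>, which is \<open>\<le> 0\<close> by
  subadditivity of Shannon entropy.  The bound is sharp because product states \<open>\<rho>\<^sub>A \<otimes> \<rho>\<^sub>B\<close>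
  have additive entropies; that \<open>\<rho>\<^sub>A \<otimes> \<rho>\<^sub>B\<close> is positive follows from a Gram decomposition
  of \<open>\<rho>\<^sub>A\<close>, obtained by repeated Schur complements.\<close>

section \<open>Matrices on a finite index type\<close>

definition quad_form :: "('n::finite \<Rightarrow> 'n \<Rightarrow> complex) \<Rightarrow> ('n \<Rightarrow> complex) \<Rightarrow> complex" where
  "quad_form M v = cinner_fun v (apply_op M v)"

definition op_trace :: "('n::finite \<Rightarrow> 'n \<Rightarrow> complex) \<Rightarrow> complex" where
  "op_trace M = (\<Sum>x\<in>UNIV. M x x)"

definition hermitian :: "('n::finite \<Rightarrow> 'n \<Rightarrow> complex) \<Rightarrow> bool" where
  "hermitian M \<longleftrightarrow> (\<forall>x y. M y x = cnj (M x y))"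

definition psd :: "('n::finite \<Rightarrow> 'n \<Rightarrow> complex) \<Rightarrow> bool" where
  "psd M \<longleftrightarrow> hermitian M \<and> (\<forall>v. 0 \<le> Re (quad_form M v))"

lemma hermitian_cnj: "hermitian M \<Longrightarrow> cnj (M x y) = M y x"
  unfolding hermitian_def by metis

lemma hermitianI: "(\<And>x y. cnj (M x y) = M y x) \<Longrightarrow> hermitian M"
  unfolding hermitian_def by metis

lemma quad_form_expand: "quad_form M v = (\<Sum>x\<in>UNIV. \<Sum>y\<in>UNIV. cnj (v x) * M x y * v y)"
  unfolding quad_form_def cinner_fun_def apply_op_def
  by (simp add: sum_distrib_left mult.assoc)

lemma cnj_quad_form_hermitian:
  assumes "hermitian M"
  shows "cnj (quad_form M v) = quad_form M v"
proof -
  have "cnj (quad_form M v) = (\<Sum>x\<in>UNIV. \<Sum>y\<in>UNIV. cnj (v y) * M y x * v x)"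
    unfolding quad_form_expand by (simp add: hermitian_cnj[OF assms] mult_ac)
  also have "\<dots> = quad_form M v"
    unfolding quad_form_expand by (rule sum.swap)
  finally show ?thesis .
qed

lemma psd_quad_form_real:
  assumes "psd M"
  shows "quad_form M v = of_real (Re (quad_form M v))"
  using cnj_quad_form_hermitian[of M v] assms unfolding psd_def
  by (metis Reals_cnj_iff of_real_Re)

lemma density_iff_psd: "density \<rho> \<longleftrightarrow> psd \<rho> \<and> op_trace \<rho> = 1"
proof
  assume "psd \<rho> \<and> op_trace \<rho> = 1"
  moreover have "Im (quad_form \<rho> v) = 0" if "psd \<rho>" for v
    using psd_quad_form_real[OF that, of v] by (metis Im_complex_of_real)
  ultimately show "density \<rho>"
    unfolding density_def psd_def hermitian_def op_trace_def quad_form_def by blast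
next
  assume "density \<rho>"
  then show "psd \<rho> \<and> op_trace \<rho> = 1"
    unfolding density_def psd_def hermitian_def op_trace_def quad_form_def by blast
qed

lemma outcome_prob_eq: "outcome_prob e \<rho> i = Re (quad_form \<rho> (e i))"
  by (simp add: outcome_prob_def quad_form_def)

text \<open>The rows of a unitary matrix are orthonormal, hence so are its columns: a one-sided
  inverse of a square matrix is two-sided.\<close>
lemma onb_complete:
  fixes e :: "'n::finite \<Rightarrow> 'n \<Rightarrow> complex"
  assumes "onb e"
  shows "(\<Sum>i\<in>UNIV. cnj (e i x) * e i y) = (if x = y then 1 else 0)"
proof -
  define A :: "complex^'n^'n" where "A = (\<chi> i x. cnj (e i x))"
  define B :: "complex^'n^'n" where "B = (\<chi> x i. e i x)"
  have "A ** B = mat 1"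
    using assms unfolding onb_def cinner_fun_def
    by (simp add: A_def B_def matrix_matrix_mult_def mat_def vec_eq_iff)
  then have "B ** A = mat 1"
    using matrix_left_right_inverse by blast
  then have "(B ** A) $ y $ x = mat 1 $ y $ x"
    by simp
  then show ?thesis
    by (auto simp add: A_def B_def matrix_matrix_mult_def mat_def mult.commute)
qed

lemma sum_quad_form_onb:
  assumes "onb f"
  shows "(\<Sum>k\<in>UNIV. quad_form M (f k)) = op_trace M"
proof -
  have "(\<Sum>k\<in>UNIV. quad_form M (f k))
      = (\<Sum>k\<in>UNIV. \<Sum>x\<in>UNIV. \<Sum>y\<in>UNIV. M x y * (cnj (f k x) * f k y))"
    by (simp add: quad_form_expand algebra_simps)
  also have "\<dots> = (\<Sum>x\<in>UNIV. \<Sum>y\<in>UNIV. \<Sum>k\<in>UNIV. M x y * (cnj (f k x) * f k y))"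
    by (subst sum.swap, rule sum.cong[OF refl], rule sum.swap)
  also have "\<dots> = (\<Sum>x\<in>UNIV. \<Sum>y\<in>UNIV. M x y * (if x = y then 1 else 0))"
    by (simp add: sum_distrib_left[symmetric] onb_complete[OF assms])
  also have "\<dots> = op_trace M"
    by (simp add: op_trace_def if_distrib[of "times _"] cong: if_cong)
  finally show ?thesis .
qed

lemma sum_outcome_prob_onb:
  assumes "psd M" "onb f"
  shows "op_trace M = of_real (\<Sum>k\<in>UNIV. outcome_prob f M k)"
proof -
  have "op_trace M = (\<Sum>k\<in>UNIV. of_real (outcome_prob f M k))"
    unfolding sum_quad_form_onb[OF assms(2), symmetric] outcome_prob_eq
    by (rule sum.cong[OF refl], rule psd_quad_form_real[OF assms(1)])
  then show ?thesis by simp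
qed

section \<open>Shannon entropy\<close>

definition shannon :: "real \<Rightarrow> ('i::finite \<Rightarrow> real) \<Rightarrow> real" where
  "shannon b p = - (\<Sum>i\<in>UNIV. p i * log b (p i))"

definition marginal_fst :: "('a::finite \<times> 'b::finite \<Rightarrow> real) \<Rightarrow> 'a \<Rightarrow> real" where
  "marginal_fst p i = (\<Sum>k\<in>UNIV. p (i, k))"

definition marginal_snd :: "('a::finite \<times> 'b::finite \<Rightarrow> real) \<Rightarrow> 'b \<Rightarrow> real" where
  "marginal_snd p k = (\<Sum>i\<in>UNIV. p (i, k))"

text \<open>No case distinction for \<open>0 log 0 = 0\<close> is needed: in HOL \<open>0 * log b 0 = 0\<close>.\<close>
lemma meas_entropy_eq_shannon: "meas_entropy b e \<rho> = shannon b (outcome_prob e \<rho>)"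
  unfolding meas_entropy_def shannon_def Let_def
  by (intro arg_cong[where f = uminus] sum.cong) auto

lemma sum_UNIV_prod:
  "(\<Sum>p\<in>(UNIV::('a::finite \<times> 'b::finite) set). g p) = (\<Sum>i\<in>UNIV. \<Sum>k\<in>UNIV. g (i, k))"
  by (simp add: sum.cartesian_product UNIV_Times_UNIV[symmetric] del: UNIV_Times_UNIV)

lemma shannon_prod_eq: "shannon b p = - (\<Sum>i\<in>UNIV. \<Sum>k\<in>UNIV. p (i, k) * log b (p (i, k)))"
  by (simp add: shannon_def sum_UNIV_prod)

lemma sum_marginal_fst: "(\<Sum>i\<in>UNIV. marginal_fst p i) = (\<Sum>x\<in>UNIV. p x)"
  by (simp add: marginal_fst_def sum_UNIV_prod)

lemma sum_marginal_snd: "(\<Sum>k\<in>UNIV. marginal_snd p k) = (\<Sum>x\<in>UNIV. p x)"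
  unfolding marginal_snd_def sum_UNIV_prod by (rule sum.swap)

lemma xlogx_mult:
  fixes p q :: real
  assumes "p \<ge> 0" "q \<ge> 0"
  shows "p * q * log b (p * q) = q * (p * log b p) + p * (q * log b q)"
  using assms by (cases "p = 0 \<or> q = 0") (auto simp: log_mult algebra_simps)

lemma shannon_divide:
  assumes "\<And>k. p k \<ge> 0" "(\<Sum>k\<in>UNIV. p k) = T" "T > 0"
  shows "shannon b (\<lambda>k. p k / T) = (shannon b p + T * log b T) / T"
proof -
  have "p k / T * log b (p k / T) = (p k * log b (p k) - p k * log b T) / T" for k
    using assms by (cases "p k = 0") (auto simp: log_divide field_simps)
  then have "shannon b (\<lambda>k. p k / T) = - (\<Sum>k\<in>UNIV. (p k * log b (p k) - p k * log b T) / T)"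
    unfolding shannon_def by (simp only:)
  also have "\<dots> = (T * log b T - (\<Sum>k\<in>UNIV. p k * log b (p k))) / T"
    using assms(2)
    by (simp add: sum_subtractf diff_divide_distrib flip: sum_divide_distrib sum_distrib_right)
  also have "\<dots> = (shannon b p + T * log b T) / T"
    by (simp add: shannon_def)
  finally show ?thesis .
qed

lemma shannon_product:
  fixes p :: "'a::finite \<Rightarrow> real" and q :: "'b::finite \<Rightarrow> real"
  assumes "\<And>i. p i \<ge> 0" "(\<Sum>i\<in>UNIV. p i) = 1" "\<And>k. q k \<ge> 0" "(\<Sum>k\<in>UNIV. q k) = 1"
  shows "shannon b (\<lambda>(i, k). p i * q k) = shannon b p + shannon b q"
  using assms
  by (simp add: shannon_prod_eq shannon_def xlogx_mult sum.distrib
        sum_distrib_left[symmetric] sum_distrib_right[symmetric])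

lemma xlogx_ge_cross_term:
  assumes b: "b > 1" and "0 \<le> r" "r \<le> t" "r \<le> s"
  shows "r * log b r - r * log b t - r * log b s \<ge> (r - t * s) / ln b"
proof (cases "r = 0")
  case True
  with assms show ?thesis by (simp add: divide_nonpos_pos)
next
  case False
  with assms have pos: "r > 0" "t > 0" "s > 0" by auto
  have "r * ln (t * s / r) \<le> r * (t * s / r - 1)"
    using pos by (intro mult_left_mono ln_le_minus_one) auto
  also have "\<dots> = t * s - r" using pos by (simp add: field_simps)
  finally have "r * (ln t + ln s - ln r) \<le> t * s - r"
    using pos by (simp add: ln_div ln_mult)
  then have "(r - t * s) / ln b \<le> (r * ln r - r * ln t - r * ln s) / ln b"
    using b by (intro divide_right_mono) (auto simp: algebra_simps)
  then show ?thesis by (simp add: log_def diff_divide_distrib)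
qed

lemma shannon_subadditive:
  fixes p :: "'a::finite \<times> 'b::finite \<Rightarrow> real"
  assumes b: "b > 1" and nonneg: "\<And>x. p x \<ge> 0" and sum1: "(\<Sum>x\<in>UNIV. p x) = 1"
  shows "shannon b p \<le> shannon b (marginal_fst p) + shannon b (marginal_snd p)"
proof -
  define t where "t = marginal_fst p"
  define s where "s = marginal_snd p"
  have "t i \<ge> p (i, k)" for i k
    unfolding t_def marginal_fst_def by (rule member_le_sum) (auto simp: nonneg)
  moreover have "s k \<ge> p (i, k)" for i k
    unfolding s_def marginal_snd_def
    by (rule member_le_sum[where f = "\<lambda>i. p (i, k)"]) (auto simp: nonneg)
  ultimately have "(\<Sum>i\<in>UNIV. \<Sum>k\<in>UNIV. (p (i, k) - t i * s k) / ln b)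
      \<le> (\<Sum>i\<in>UNIV. \<Sum>k\<in>UNIV. p (i, k) * log b (p (i, k))
           - p (i, k) * log b (t i) - p (i, k) * log b (s k))"
    by (intro sum_mono xlogx_ge_cross_term[OF b nonneg])
  moreover have "(\<Sum>i\<in>UNIV. \<Sum>k\<in>UNIV. (p (i, k) - t i * s k) / ln b) = 0"
  proof -
    have "(\<Sum>i\<in>UNIV. t i) = 1" "(\<Sum>k\<in>UNIV. s k) = 1"
      using sum1 by (simp_all add: t_def s_def sum_marginal_fst sum_marginal_snd)
    then have "(\<Sum>i\<in>UNIV. \<Sum>k\<in>UNIV. p (i, k) - t i * s k) = 0"
      using sum1 by (simp add: sum_subtractf sum_product[symmetric] sum_UNIV_prod)
    then show ?thesis by (simp add: sum_divide_distrib[symmetric])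
  qed
  moreover have "(\<Sum>i\<in>UNIV. \<Sum>k\<in>UNIV. p (i, k) * log b (t i)) = - shannon b t"
    by (simp add: shannon_def t_def marginal_fst_def sum_distrib_right)
  moreover have "(\<Sum>i\<in>UNIV. \<Sum>k\<in>UNIV. p (i, k) * log b (s k)) = - shannon b s"
    by (subst sum.swap) (simp add: shannon_def s_def marginal_snd_def sum_distrib_right)
  ultimately show ?thesis
    by (simp add: t_def s_def sum_subtractf shannon_prod_eq)
qed

section \<open>Uncertainty relations for unnormalised states\<close>

lemma psd_divide:
  assumes "psd M" "T > 0"
  shows "psd (\<lambda>x y. M x y / of_real T)"
proof -
  have "quad_form (\<lambda>x y. M x y / of_real T) v = quad_form M v / of_real T" for v
    by (simp add: quad_form_expand sum_divide_distrib)
  moreover have "hermitian (\<lambda>x y. M x y / of_real T)"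
    using assms unfolding psd_def hermitian_def by (metis complex_cnj_divide complex_cnj_complex_of_real)
  ultimately show ?thesis
    using assms unfolding psd_def by simp
qed

lemma outcome_prob_divide:
  "outcome_prob f (\<lambda>x y. M x y / of_real T) = (\<lambda>k. outcome_prob f M k / T)"
  by (simp add: fun_eq_iff outcome_prob_eq quad_form_expand sum_divide_distrib)

lemma outcome_prob_nonneg: "psd M \<Longrightarrow> outcome_prob f M k \<ge> 0"
  by (simp add: psd_def outcome_prob_eq)

lemma sum_outcome_prob_density:
  assumes "density \<rho>" "onb f"
  shows "(\<Sum>k\<in>UNIV. outcome_prob f \<rho> k) = 1"
  using sum_outcome_prob_onb[of \<rho> f] assms by (metis density_iff_psd of_real_eq_1_iff)

lemma uncertainty_relation_scaled:
  assumes b: "b > 1" and M: "psd M" and tr: "op_trace M = of_real T"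
    and f: "onb f" and h: "onb h"
    and hyp: "\<forall>\<rho>. density \<rho> \<longrightarrow> lam * meas_entropy b f \<rho> + mu * meas_entropy b h \<rho> \<ge> c"
  shows "T * c \<le> lam * (shannon b (outcome_prob f M) + T * log b T)
                + mu * (shannon b (outcome_prob h M) + T * log b T)"
proof -
  have sum_f: "(\<Sum>k\<in>UNIV. outcome_prob f M k) = T"
    using sum_outcome_prob_onb[OF M f] tr by (metis of_real_eq_iff)
  have sum_h: "(\<Sum>k\<in>UNIV. outcome_prob h M k) = T"
    using sum_outcome_prob_onb[OF M h] tr by (metis of_real_eq_iff)
  have "T \<ge> 0"
    unfolding sum_f[symmetric] by (simp add: sum_nonneg outcome_prob_nonneg[OF M])
  then consider "T = 0" | "T > 0" by linarith
  then show ?thesis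
  proof cases
    case 1
    then have "outcome_prob f M = (\<lambda>_. 0)" "outcome_prob h M = (\<lambda>_. 0)"
      using sum_f sum_h sum_nonneg_eq_0_iff[of UNIV "outcome_prob _ M"] outcome_prob_nonneg[OF M]
      by auto
    with 1 show ?thesis by (simp add: shannon_def)
  next
    case 2
    let ?M = "\<lambda>x y. M x y / of_real T"
    have "density ?M"
      using psd_divide[OF M 2] tr 2 by (simp add: density_iff_psd op_trace_def flip: sum_divide_distrib)
    then have "c \<le> lam * meas_entropy b f ?M + mu * meas_entropy b h ?M"
      using hyp by blast
    also have "\<dots> = lam * shannon b (\<lambda>k. outcome_prob f M k / T)
                    + mu * shannon b (\<lambda>k. outcome_prob h M k / T)"
      by (simp only: meas_entropy_eq_shannon outcome_prob_divide)
    also have "\<dots> = (lam * (shannon b (outcome_prob f M) + T * log b T)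
                    + mu * (shannon b (outcome_prob h M) + T * log b T)) / T"
      using 2 sum_f sum_h
      by (simp add: shannon_divide outcome_prob_nonneg[OF M] field_simps)
    finally show ?thesis
      using 2 by (simp add: pos_le_divide_eq mult.commute)
  qed
qed

section \<open>Conditioning a bipartite state on one factor\<close>

definition tensor_vec :: "('a::finite \<Rightarrow> complex) \<Rightarrow> ('b::finite \<Rightarrow> complex) \<Rightarrow> 'a \<times> 'b \<Rightarrow> complex" where
  "tensor_vec u w = (\<lambda>(x, y). u x * w y)"

text \<open>\<open>cond_fst \<rho> u = (\<langle>u| \<otimes> 1) \<rho> (|u\<rangle> \<otimes> 1)\<close> is the unnormalised state of the second
  factor after the first factor is found in state \<open>u\<close>; \<open>cond_snd\<close> is its mirror image.\<close>
definition cond_fst :: "('a::finite \<times> 'b::finite \<Rightarrow> 'a \<times> 'b \<Rightarrow> complex) \<Rightarrow> ('a \<Rightarrow> complex) \<Rightarrow> 'b \<Rightarrow> 'b \<Rightarrow> complex" where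
  "cond_fst \<rho> u = (\<lambda>y y'. \<Sum>x\<in>UNIV. \<Sum>x'\<in>UNIV. cnj (u x) * \<rho> (x, y) (x', y') * u x')"

definition cond_snd :: "('a::finite \<times> 'b::finite \<Rightarrow> 'a \<times> 'b \<Rightarrow> complex) \<Rightarrow> ('b \<Rightarrow> complex) \<Rightarrow> 'a \<Rightarrow> 'a \<Rightarrow> complex" where
  "cond_snd \<rho> w = (\<lambda>x x'. \<Sum>y\<in>UNIV. \<Sum>y'\<in>UNIV. cnj (w y) * \<rho> (x, y) (x', y') * w y')"

lemma tensor_basis_eq: "tensor_basis e f (i, k) = tensor_vec (e i) (f k)"
  by (simp add: tensor_basis_def tensor_vec_def)

lemma onb_tensor_basis:
  assumes "onb e" "onb f"
  shows "onb (tensor_basis e f)"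
  unfolding onb_def
proof (intro allI)
  fix p q :: "'a::finite \<times> 'b::finite"
  obtain i k i' k' where pq: "p = (i, k)" "q = (i', k')" by force
  have "cinner_fun (tensor_basis e f p) (tensor_basis e f q)
      = cinner_fun (e i) (e i') * cinner_fun (f k) (f k')"
    unfolding pq cinner_fun_def tensor_basis_def
    by (simp add: sum_UNIV_prod sum_product mult_ac)
  then show "cinner_fun (tensor_basis e f p) (tensor_basis e f q) = (if p = q then 1 else 0)"
    using assms unfolding onb_def pq by simp
qed

lemma quad_form_tensor_vec:
  "quad_form \<rho> (tensor_vec u w) = (\<Sum>x\<in>UNIV. \<Sum>y\<in>UNIV. \<Sum>x'\<in>UNIV. \<Sum>y'\<in>UNIV.
     cnj (u x) * cnj (w y) * \<rho> (x, y) (x', y') * (u x' * w y'))"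
  by (simp add: quad_form_expand sum_UNIV_prod tensor_vec_def sum_distrib_left sum_distrib_right)

lemma quad_form_cond_fst: "quad_form (cond_fst \<rho> u) w = quad_form \<rho> (tensor_vec u w)"
proof -
  let ?F = "\<lambda>x y x' y'. cnj (u x) * cnj (w y) * \<rho> (x, y) (x', y') * (u x' * w y')"
  have "quad_form (cond_fst \<rho> u) w = (\<Sum>y\<in>UNIV. \<Sum>y'\<in>UNIV. \<Sum>x\<in>UNIV. \<Sum>x'\<in>UNIV. ?F x y x' y')"
    by (simp add: quad_form_expand cond_fst_def sum_distrib_left sum_distrib_right mult_ac)
  also have "\<dots> = (\<Sum>y\<in>UNIV. \<Sum>x\<in>UNIV. \<Sum>y'\<in>UNIV. \<Sum>x'\<in>UNIV. ?F x y x' y')"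
    by (rule sum.cong[OF refl], rule sum.swap)
  also have "\<dots> = (\<Sum>x\<in>UNIV. \<Sum>y\<in>UNIV. \<Sum>x'\<in>UNIV. \<Sum>y'\<in>UNIV. ?F x y x' y')"
    by (subst sum.swap) (simp add: sum.swap[of "\<lambda>y' x'. ?F _ _ x' y'"])
  also have "\<dots> = quad_form \<rho> (tensor_vec u w)"
    by (simp add: quad_form_tensor_vec)
  finally show ?thesis .
qed

lemma quad_form_cond_snd: "quad_form (cond_snd \<rho> w) u = quad_form \<rho> (tensor_vec u w)"
proof -
  let ?F = "\<lambda>x y x' y'. cnj (u x) * cnj (w y) * \<rho> (x, y) (x', y') * (u x' * w y')"
  have "quad_form (cond_snd \<rho> w) u = (\<Sum>x\<in>UNIV. \<Sum>x'\<in>UNIV. \<Sum>y\<in>UNIV. \<Sum>y'\<in>UNIV. ?F x y x' y')"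
    by (simp add: quad_form_expand cond_snd_def sum_distrib_left sum_distrib_right mult_ac)
  also have "\<dots> = (\<Sum>x\<in>UNIV. \<Sum>y\<in>UNIV. \<Sum>x'\<in>UNIV. \<Sum>y'\<in>UNIV. ?F x y x' y')"
    by (rule sum.cong[OF refl], rule sum.swap)
  also have "\<dots> = quad_form \<rho> (tensor_vec u w)"
    by (simp add: quad_form_tensor_vec)
  finally show ?thesis .
qed

lemma hermitian_cond_fst:
  assumes "hermitian \<rho>"
  shows "hermitian (cond_fst \<rho> u)"
  unfolding hermitian_def cond_fst_def
  by (subst sum.swap) (simp add: hermitian_cnj[OF assms] mult_ac)

lemma hermitian_cond_snd:
  assumes "hermitian \<rho>"
  shows "hermitian (cond_snd \<rho> w)"
  unfolding hermitian_def cond_snd_def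
  by (subst sum.swap) (simp add: hermitian_cnj[OF assms] mult_ac)

lemma psd_cond_fst: "psd \<rho> \<Longrightarrow> psd (cond_fst \<rho> u)"
  by (simp add: psd_def hermitian_cond_fst quad_form_cond_fst)

lemma psd_cond_snd: "psd \<rho> \<Longrightarrow> psd (cond_snd \<rho> w)"
  by (simp add: psd_def hermitian_cond_snd quad_form_cond_snd)

lemma outcome_prob_cond_fst:
  "outcome_prob f (cond_fst \<rho> (e i)) k = outcome_prob (tensor_basis e f) \<rho> (i, k)"
  by (simp add: outcome_prob_eq quad_form_cond_fst tensor_basis_eq)

lemma outcome_prob_cond_snd:
  "outcome_prob e (cond_snd \<rho> (f k)) i = outcome_prob (tensor_basis e f) \<rho> (i, k)"
  by (simp add: outcome_prob_eq quad_form_cond_snd tensor_basis_eq)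

lemma sum_scaled_bounds:
  fixes t S1 S2 :: "'i::finite \<Rightarrow> real"
  assumes bound: "\<And>i. t i * c \<le> lam * (S1 i + t i * log b (t i)) + mu * (S2 i + t i * log b (t i))"
    and sum1: "(\<Sum>i\<in>UNIV. t i) = 1"
  shows "c \<le> lam * ((\<Sum>i\<in>UNIV. S1 i) - shannon b t) + mu * ((\<Sum>i\<in>UNIV. S2 i) - shannon b t)"
proof -
  have "c = (\<Sum>i\<in>UNIV. t i * c)"
    using sum1 by (simp flip: sum_distrib_right)
  also have "\<dots> \<le> (\<Sum>i\<in>UNIV. lam * (S1 i + t i * log b (t i)) + mu * (S2 i + t i * log b (t i)))"
    by (rule sum_mono, rule bound)
  also have "\<dots> = lam * ((\<Sum>i\<in>UNIV. S1 i) - shannon b t) + mu * ((\<Sum>i\<in>UNIV. S2 i) - shannon b t)"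
    by (simp add: shannon_def sum.distrib flip: sum_distrib_left)
  finally show ?thesis .
qed

lemma entropy_bound_cond_fst:
  fixes \<rho> :: "'a::finite \<times> 'b::finite \<Rightarrow> 'a \<times> 'b \<Rightarrow> complex"
    and e :: "'a \<Rightarrow> 'a \<Rightarrow> complex" and f h :: "'b \<Rightarrow> 'b \<Rightarrow> complex"
  assumes b: "b > 1" and \<rho>: "density \<rho>" and e: "onb e" and f: "onb f" and h: "onb h"
    and hyp: "\<forall>\<sigma>::'b \<Rightarrow> 'b \<Rightarrow> complex. density \<sigma> \<longrightarrow>
               lam * meas_entropy b f \<sigma> + mu * meas_entropy b h \<sigma> \<ge> c"
  defines "t \<equiv> marginal_fst (outcome_prob (tensor_basis e h) \<rho>)"
  shows "c \<le> lam * (meas_entropy b (tensor_basis e f) \<rho> - shannon b t)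
           + mu * (meas_entropy b (tensor_basis e h) \<rho> - shannon b t)"
proof -
  have psd: "psd \<rho>"
    using \<rho> by (simp add: density_iff_psd)
  have tr_i: "op_trace (cond_fst \<rho> (e i)) = of_real (t i)" for i
    using sum_outcome_prob_onb[OF psd_cond_fst[OF psd] h]
    by (simp add: t_def marginal_fst_def outcome_prob_cond_fst)
  have sum1: "(\<Sum>i\<in>UNIV. t i) = 1"
    unfolding t_def sum_marginal_fst by (rule sum_outcome_prob_density[OF \<rho> onb_tensor_basis[OF e h]])
  have H: "meas_entropy b (tensor_basis e g) \<rho>
      = (\<Sum>i\<in>UNIV. shannon b (outcome_prob g (cond_fst \<rho> (e i))))" for g :: "'b \<Rightarrow> 'b \<Rightarrow> complex"
    by (simp add: meas_entropy_eq_shannon shannon_prod_eq shannon_def outcome_prob_cond_fst sum_negf)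
  show ?thesis
    unfolding H
    by (rule sum_scaled_bounds[OF uncertainty_relation_scaled[OF b psd_cond_fst[OF psd] tr_i f h hyp] sum1])
qed

lemma entropy_bound_cond_snd:
  fixes \<rho> :: "'a::finite \<times> 'b::finite \<Rightarrow> 'a \<times> 'b \<Rightarrow> complex"
    and e g :: "'a \<Rightarrow> 'a \<Rightarrow> complex" and h :: "'b \<Rightarrow> 'b \<Rightarrow> complex"
  assumes b: "b > 1" and \<rho>: "density \<rho>" and e: "onb e" and g: "onb g" and h: "onb h"
    and hyp: "\<forall>\<sigma>::'a \<Rightarrow> 'a \<Rightarrow> complex. density \<sigma> \<longrightarrow>
               lam * meas_entropy b e \<sigma> + mu * meas_entropy b g \<sigma> \<ge> c"
  defines "s \<equiv> marginal_snd (outcome_prob (tensor_basis e h) \<rho>)"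
  shows "c \<le> lam * (meas_entropy b (tensor_basis e h) \<rho> - shannon b s)
           + mu * (meas_entropy b (tensor_basis g h) \<rho> - shannon b s)"
proof -
  have psd: "psd \<rho>"
    using \<rho> by (simp add: density_iff_psd)
  have tr_k: "op_trace (cond_snd \<rho> (h k)) = of_real (s k)" for k
    using sum_outcome_prob_onb[OF psd_cond_snd[OF psd] e]
    by (simp add: s_def marginal_snd_def outcome_prob_cond_snd)
  have sum1: "(\<Sum>k\<in>UNIV. s k) = 1"
    unfolding s_def sum_marginal_snd by (rule sum_outcome_prob_density[OF \<rho> onb_tensor_basis[OF e h]])
  have H: "meas_entropy b (tensor_basis f h) \<rho>
      = (\<Sum>k\<in>UNIV. shannon b (outcome_prob f (cond_snd \<rho> (h k))))" for f :: "'a \<Rightarrow> 'a \<Rightarrow> complex"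
    by (simp add: meas_entropy_eq_shannon shannon_prod_eq shannon_def outcome_prob_cond_snd sum_negf)
      (rule sum.swap)
  show ?thesis
    unfolding H
    by (rule sum_scaled_bounds[OF uncertainty_relation_scaled[OF b psd_cond_snd[OF psd] tr_k e g hyp] sum1])
qed

lemma entropic_uncertainty_tensor:
  fixes \<rho> :: "'a::finite \<times> 'b::finite \<Rightarrow> 'a \<times> 'b \<Rightarrow> complex"
    and XA YA :: "'a \<Rightarrow> 'a \<Rightarrow> complex" and XB YB :: "'b \<Rightarrow> 'b \<Rightarrow> complex"
  assumes b: "b > 1" and "lam > 0" and "mu > 0"
    and XA: "onb XA" and YA: "onb YA" and XB: "onb XB" and YB: "onb YB"
    and hA: "\<forall>\<sigma>::'a \<Rightarrow> 'a \<Rightarrow> complex. density \<sigma> \<longrightarrow>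
               lam * meas_entropy b XA \<sigma> + mu * meas_entropy b YA \<sigma> \<ge> cA"
    and hB: "\<forall>\<sigma>::'b \<Rightarrow> 'b \<Rightarrow> complex. density \<sigma> \<longrightarrow>
               lam * meas_entropy b XB \<sigma> + mu * meas_entropy b YB \<sigma> \<ge> cB"
    and \<rho>: "density \<rho>"
  shows "lam * meas_entropy b (tensor_basis XA XB) \<rho> + mu * meas_entropy b (tensor_basis YA YB) \<rho>
         \<ge> cA + cB"
proof -
  define P where "P = outcome_prob (tensor_basis XA YB) \<rho>"
  define excess where "excess = shannon b (marginal_fst P) + shannon b (marginal_snd P)
                                - meas_entropy b (tensor_basis XA YB) \<rho>"
  have "cB \<le> lam * (meas_entropy b (tensor_basis XA XB) \<rho> - shannon b (marginal_fst P))
            + mu * (meas_entropy b (tensor_basis XA YB) \<rho> - shannon b (marginal_fst P))"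
    unfolding P_def by (rule entropy_bound_cond_fst[OF b \<rho> XA XB YB hB])
  moreover have "cA \<le> lam * (meas_entropy b (tensor_basis XA YB) \<rho> - shannon b (marginal_snd P))
                    + mu * (meas_entropy b (tensor_basis YA YB) \<rho> - shannon b (marginal_snd P))"
    unfolding P_def by (rule entropy_bound_cond_snd[OF b \<rho> XA YA YB hA])
  moreover have "excess \<ge> 0"
    using shannon_subadditive[OF b, of P] sum_outcome_prob_density[OF \<rho> onb_tensor_basis[OF XA YB]]
      outcome_prob_nonneg[of \<rho>] \<rho>
    by (simp add: excess_def P_def meas_entropy_eq_shannon density_iff_psd)
  then have "lam * excess \<ge> 0" "mu * excess \<ge> 0"
    using assms(2,3) by simp_all
  ultimately show ?thesis
    unfolding excess_def right_diff_distrib distrib_left by linarith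
qed

section \<open>Gram decomposition of positive semidefinite matrices\<close>

lemma quad_form_add_delta:
  fixes M :: "'n::finite \<Rightarrow> 'n \<Rightarrow> complex"
  shows "quad_form M (\<lambda>x. v x + (if x = a then s else 0)) =
    quad_form M v + cnj s * (\<Sum>y\<in>UNIV. M a y * v y) + s * (\<Sum>x\<in>UNIV. cnj (v x) * M x a)
    + cnj s * s * M a a"
proof -
  have "cnj (v x + (if x = a then s else 0)) * M x y * (v y + (if y = a then s else 0))
      = cnj (v x) * M x y * v y + (if x = a then cnj s * M a y * v y else 0)
        + (if y = a then cnj (v x) * M x a * s else 0)
        + (if x = a then (if y = a then cnj s * s * M a a else 0) else 0)" for x y
    by (auto simp: algebra_simps)
  moreover have "(\<Sum>y\<in>UNIV. if x = a then g y else 0) = (if x = a then sum g UNIV else 0)"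
    for x and g :: "'n \<Rightarrow> complex"
    by simp
  ultimately show ?thesis
    by (simp add: quad_form_expand sum.distrib sum_distrib_left mult_ac)
qed

lemma quad_form_delta: "quad_form M (\<lambda>x. if x = a then 1 else 0) = M a a"
  using quad_form_add_delta[of M "\<lambda>_. 0" a 1] by (simp add: quad_form_expand)

lemma sum_delta_right: "(\<Sum>x\<in>(UNIV::'n::finite set). f x * (if x = a then 1 else 0)) = (f a :: complex)"
proof -
  have "f x * (if x = a then 1 else 0) = (if x = a then f a else 0)" for x
    by simp
  then show ?thesis by simp
qed

lemma sum_delta_left: "(\<Sum>x\<in>(UNIV::'n::finite set). cnj (if x = a then 1 else 0) * f x) = (f a :: complex)"
proof -
  have "cnj (if x = a then 1 else 0) * f x = (if x = a then f a else 0)" for x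
    by simp
  then show ?thesis by simp
qed

lemma psd_diag_real:
  assumes "psd M"
  shows "M a a = of_real (Re (M a a))" and "Re (M a a) \<ge> 0"
  using psd_quad_form_real[OF assms, of "\<lambda>x. if x = a then 1 else 0"] assms
  by (simp_all add: quad_form_delta psd_def) (metis quad_form_delta)

lemma psd_diag_zero_row:
  assumes M: "psd M" and zero: "M a a = 0"
  shows "M a y = 0"
proof (rule ccontr)
  assume nz: "M a y \<noteq> 0"
  define z where "z = M a y"
  define t where "t = (\<bar>Re (M y y)\<bar> + 1) / (2 * (cmod z)\<^sup>2)"
    \<comment> \<open>large enough to make the form negative at \<open>v\<close> below\<close>
  define v where "v = (\<lambda>x. (if x = y then 1 else 0) + (if x = a then - of_real t * z else (0::complex)))"
  have zz: "cnj z * z = of_real ((cmod z)\<^sup>2)" "z * cnj z = of_real ((cmod z)\<^sup>2)"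
    using complex_norm_square[of z] by (simp_all add: mult.commute)
  have "quad_form M v = M y y - of_real t * cnj z * z - of_real t * z * cnj z"
    using hermitian_cnj[of M a y] M zero
    by (simp add: v_def z_def quad_form_add_delta quad_form_delta sum_delta_left sum_delta_right psd_def)
  also have "\<dots> = M y y - of_real (2 * t * (cmod z)\<^sup>2)"
    by (simp add: zz mult.assoc)
  finally have "Re (quad_form M v) = Re (M y y) - 2 * t * (cmod z)\<^sup>2"
    by simp
  moreover have "2 * t * (cmod z)\<^sup>2 = \<bar>Re (M y y)\<bar> + 1"
    using nz by (simp add: t_def z_def)
  ultimately have "Re (quad_form M v) < 0"
    by linarith
  then show False
    using M unfolding psd_def by (simp add: not_less[symmetric])
qed

text \<open>If \<open>M a a = 0\<close> then row and column \<open>a\<close>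
  of a positive \<open>M\<close> vanish, and division by zero makes \<open>schur_step M a = M\<close>.\<close>
definition schur_step :: "('n::finite \<Rightarrow> 'n \<Rightarrow> complex) \<Rightarrow> 'n \<Rightarrow> 'n \<Rightarrow> 'n \<Rightarrow> complex" where
  "schur_step M a = (\<lambda>x y. M x y - M x a * M a y / M a a)"

lemma schur_step_row_col:
  assumes "psd M"
  shows "schur_step M a a y = 0" and "schur_step M a x a = 0"
proof -
  have "M x a = cnj (M a x)"
    using assms by (simp add: hermitian_cnj psd_def)
  then show "schur_step M a a y = 0" "schur_step M a x a = 0"
    using psd_diag_zero_row[OF assms, of a] by (auto simp: schur_step_def)
qed

lemma psd_schur_step:
  assumes M: "psd M"
  shows "psd (schur_step M a)"
proof -
  define d where "d = Re (M a a)"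
  have d: "M a a = of_real d" "d \<ge> 0"
    using psd_diag_real[OF M] by (simp_all add: d_def)
  have herm: "cnj (M x y) = M y x" for x y
    using M by (simp add: hermitian_cnj psd_def)
  have "hermitian (schur_step M a)"
    unfolding hermitian_def schur_step_def by (simp add: herm d mult.commute)
  moreover have "0 \<le> Re (quad_form (schur_step M a) v)" for v
  proof -
    define c where "c = (\<Sum>y\<in>UNIV. M a y * v y)"
    have cnj_c: "cnj c = (\<Sum>x\<in>UNIV. cnj (v x) * M x a)"
      by (simp add: c_def herm mult.commute)
    have "quad_form (schur_step M a) v = quad_form M v - cnj c * c / M a a"
      unfolding schur_step_def quad_form_expand c_def
      by (simp add: herm sum_subtractf sum_divide_distrib sum_distrib_left sum_distrib_right
          right_diff_distrib left_diff_distrib mult_ac)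
    also have "\<dots> = quad_form M v + cnj (- c / M a a) * c + (- c / M a a) * cnj c
                       + cnj (- c / M a a) * (- c / M a a) * M a a"
      using d by (cases "d = 0") (simp_all add: field_simps)
    also have "\<dots> = quad_form M (\<lambda>x. v x + (if x = a then - c / M a a else 0))"
      unfolding quad_form_add_delta c_def[symmetric] cnj_c[symmetric] ..
    finally show ?thesis
      using M unfolding psd_def by simp
  qed
  ultimately show ?thesis
    unfolding psd_def by blast
qed

lemma schur_step_rank_one:
  fixes M :: "'n::finite \<Rightarrow> 'n \<Rightarrow> complex" and a :: 'n
  assumes "psd M"
  defines "w \<equiv> \<lambda>x. M x a / of_real (sqrt (Re (M a a)))"
  shows "M x y = schur_step M a x y + w x * cnj (w y)"
proof -
  have "M a a = of_real (Re (M a a))" "Re (M a a) \<ge> 0"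
    using psd_diag_real[OF assms(1)] by simp_all
  moreover have "cnj (M y a) = M a y"
    using assms(1) by (simp add: hermitian_cnj psd_def)
  ultimately have "w x * cnj (w y) = M x a * M a y / M a a"
    unfolding w_def by (simp flip: of_real_mult)
  then show ?thesis
    by (simp add: schur_step_def)
qed

lemma psd_gram_supported:
  assumes "finite S" "psd M" "\<And>x y. x \<notin> S \<or> y \<notin> S \<Longrightarrow> M x y = 0"
  shows "\<exists>W (m::nat). \<forall>x y. M x y = (\<Sum>k<m. W k x * cnj (W k y))"
  using assms
proof (induction S arbitrary: M rule: finite_induct)
  case empty
  then show ?case
    by (intro exI[of _ "\<lambda>_ _. 0"] exI[of _ 0]) simp
next
  case (insert a S)
  let ?M' = "schur_step M a"
  have "?M' x y = 0" if "x \<notin> S \<or> y \<notin> S" for x y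
  proof (cases "x = a \<or> y = a")
    case True
    then show ?thesis using schur_step_row_col[OF insert.prems(1)] by auto
  next
    case False
    then have "M x y = 0" "M x a = 0 \<or> M a y = 0"
      using that insert.prems(2) by blast+
    then show ?thesis by (auto simp: schur_step_def)
  qed
  then obtain W and m :: nat where W: "\<forall>x y. ?M' x y = (\<Sum>k<m. W k x * cnj (W k y))"
    using insert.IH[OF psd_schur_step[OF insert.prems(1)]] by blast
  define w where "w = (\<lambda>x. M x a / of_real (sqrt (Re (M a a))))"
  have "M x y = (\<Sum>k<m. W k x * cnj (W k y)) + w x * cnj (w y)" for x y
    using schur_step_rank_one[OF insert.prems(1), of x y a] W unfolding w_def by simp
  then have "M x y = (\<Sum>k<Suc m. (W(m := w)) k x * cnj ((W(m := w)) k y))" for x y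
    by simp
  then show ?case by blast
qed

lemma psd_gram:
  assumes "psd M"
  shows "\<exists>W (m::nat). \<forall>x y. M x y = (\<Sum>k<m. W k x * cnj (W k y))"
  using psd_gram_supported[of UNIV M] assms by simp

section \<open>Product states\<close>

definition tensor_op :: "('a::finite \<Rightarrow> 'a \<Rightarrow> complex) \<Rightarrow> ('b::finite \<Rightarrow> 'b \<Rightarrow> complex)
    \<Rightarrow> 'a \<times> 'b \<Rightarrow> 'a \<times> 'b \<Rightarrow> complex" where
  "tensor_op A B = (\<lambda>p q. A (fst p) (fst q) * B (snd p) (snd q))"

lemma quad_form_sum:
  "quad_form (\<lambda>x y. \<Sum>k\<in>K. M k x y) v = (\<Sum>k\<in>K. quad_form (M k) v)"
proof -
  have "quad_form (\<lambda>x y. \<Sum>k\<in>K. M k x y) v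
      = (\<Sum>x\<in>UNIV. \<Sum>y\<in>UNIV. \<Sum>k\<in>K. cnj (v x) * M k x y * v y)"
    by (simp add: quad_form_expand sum_distrib_left sum_distrib_right)
  also have "\<dots> = (\<Sum>k\<in>K. \<Sum>x\<in>UNIV. \<Sum>y\<in>UNIV. cnj (v x) * M k x y * v y)"
    by (subst sum.swap) (rule sum.cong[OF refl], rule sum.swap)
  also have "\<dots> = (\<Sum>k\<in>K. quad_form (M k) v)"
    by (simp add: quad_form_expand)
  finally show ?thesis .
qed

lemma quad_form_tensor_op_rank_one:
  "quad_form (tensor_op (\<lambda>x x'. w x * cnj (w x')) B) v = quad_form B (\<lambda>y. \<Sum>x\<in>UNIV. cnj (w x) * v (x, y))"
proof -
  let ?F = "\<lambda>x y x' y'. w x * cnj (v (x, y)) * B y y' * (cnj (w x') * v (x', y'))"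
  have "quad_form (tensor_op (\<lambda>x x'. w x * cnj (w x')) B) v
      = (\<Sum>x\<in>UNIV. \<Sum>y\<in>UNIV. \<Sum>x'\<in>UNIV. \<Sum>y'\<in>UNIV. ?F x y x' y')"
    by (simp add: quad_form_expand sum_UNIV_prod tensor_op_def mult_ac)
  also have "\<dots> = (\<Sum>y\<in>UNIV. \<Sum>x\<in>UNIV. \<Sum>y'\<in>UNIV. \<Sum>x'\<in>UNIV. ?F x y x' y')"
    by (subst sum.swap) (rule sum.cong[OF refl], rule sum.cong[OF refl], rule sum.swap)
  also have "\<dots> = (\<Sum>y\<in>UNIV. \<Sum>y'\<in>UNIV. \<Sum>x\<in>UNIV. \<Sum>x'\<in>UNIV. ?F x y x' y')"
    by (rule sum.cong[OF refl], rule sum.swap)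
  also have "\<dots> = quad_form B (\<lambda>y. \<Sum>x\<in>UNIV. cnj (w x) * v (x, y))"
    by (simp add: quad_form_expand sum_distrib_left sum_distrib_right mult_ac)
  finally show ?thesis .
qed

lemma psd_tensor_op:
  assumes A: "psd A" and B: "psd B"
  shows "psd (tensor_op A B)"
proof -
  obtain W and m :: nat where W: "\<forall>x y. A x y = (\<Sum>k<m. W k x * cnj (W k y))"
    using psd_gram[OF A] by blast
  have "tensor_op A B = (\<lambda>p q. \<Sum>k<m. tensor_op (\<lambda>x x'. W k x * cnj (W k x')) B p q)"
    using W by (simp add: tensor_op_def fun_eq_iff sum_distrib_right)
  then have "quad_form (tensor_op A B) v
      = (\<Sum>k<m. quad_form B (\<lambda>y. \<Sum>x\<in>UNIV. cnj (W k x) * v (x, y)))" for v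
    by (simp add: quad_form_sum quad_form_tensor_op_rank_one)
  moreover have "hermitian A" "hermitian B"
    using A B by (simp_all add: psd_def)
  then have "hermitian (tensor_op A B)"
    by (intro hermitianI) (simp add: tensor_op_def hermitian_cnj)
  ultimately show ?thesis
    using B by (simp add: psd_def sum_nonneg)
qed

lemma op_trace_tensor_op: "op_trace (tensor_op A B) = op_trace A * op_trace B"
  by (simp add: op_trace_def tensor_op_def sum_UNIV_prod sum_product)

lemma density_tensor_op: "density A \<Longrightarrow> density B \<Longrightarrow> density (tensor_op A B)"
  by (simp add: density_iff_psd psd_tensor_op op_trace_tensor_op)

lemma quad_form_tensor_op_tensor_vec:
  "quad_form (tensor_op A B) (tensor_vec u w) = quad_form A u * quad_form B w"
  unfolding quad_form_tensor_vec by (simp add: quad_form_expand tensor_op_def sum_product mult_ac)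

lemma outcome_prob_tensor_op:
  assumes "psd A" "psd B"
  shows "outcome_prob (tensor_basis e f) (tensor_op A B) = (\<lambda>(i, k). outcome_prob e A i * outcome_prob f B k)"
proof -
  have "quad_form A (e i) * quad_form B (f k)
      = of_real (outcome_prob e A i * outcome_prob f B k)" for i k
    using psd_quad_form_real[OF assms(1), of "e i"] psd_quad_form_real[OF assms(2), of "f k"]
    by (metis of_real_mult outcome_prob_eq)
  then show ?thesis
    by (auto simp: fun_eq_iff outcome_prob_eq tensor_basis_eq quad_form_tensor_op_tensor_vec)
qed

lemma meas_entropy_tensor_op:
  assumes A: "density A" and B: "density B" and e: "onb e" and f: "onb f"
  shows "meas_entropy b (tensor_basis e f) (tensor_op A B) = meas_entropy b e A + meas_entropy b f B"
  using A B
  by (simp add: meas_entropy_eq_shannon density_iff_psd outcome_prob_tensor_op shannon_product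
      outcome_prob_nonneg sum_outcome_prob_density[OF A e] sum_outcome_prob_density[OF B f])

lemma psd_rank_one: "psd (\<lambda>x y. w x * cnj (w y))"
proof -
  have quad: "quad_form (\<lambda>x y. w x * cnj (w y)) v
      = cnj (\<Sum>x\<in>UNIV. cnj (w x) * v x) * (\<Sum>x\<in>UNIV. cnj (w x) * v x)" for v
  proof -
    have "quad_form (\<lambda>x y. w x * cnj (w y)) v
        = (\<Sum>x\<in>UNIV. w x * cnj (v x)) * (\<Sum>y\<in>UNIV. cnj (w y) * v y)"
      unfolding quad_form_expand sum_product by (simp add: mult_ac)
    then show ?thesis
      by simp
  qed
  have nonneg: "0 \<le> Re (cnj z * z)" for z :: complex
    by (simp add: mult.commute[of "cnj z"] complex_mult_cnj)
  have "hermitian (\<lambda>x y. w x * cnj (w y))"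
    by (rule hermitianI) simp
  with nonneg show ?thesis
    unfolding psd_def quad by blast
qed

lemma density_pure_state: "density (\<lambda>x y. if x = a \<and> y = a then 1 else 0)"
proof -
  have "(\<lambda>x y. if x = a \<and> y = a then 1 else 0)
      = (\<lambda>x y. (if x = a then 1 else 0) * cnj (if y = a then 1 else (0::complex)))"
    by (simp add: fun_eq_iff)
  then have "psd (\<lambda>x y. if x = a \<and> y = a then 1 else (0::complex))"
    using psd_rank_one[of "\<lambda>x. if x = a then 1 else 0"] by simp
  then show ?thesis
    by (simp add: density_iff_psd op_trace_def)
qed

lemma INF_eq_add_INF:
  fixes f :: "'a \<Rightarrow> real" and g :: "'b \<Rightarrow> real" and h :: "'c \<Rightarrow> real"
  assumes "A \<noteq> {}" "B \<noteq> {}"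
    and lower: "\<And>z. z \<in> C \<Longrightarrow> (INF x\<in>A. f x) + (INF y\<in>B. g y) \<le> h z"
    and upper: "\<And>x y. x \<in> A \<Longrightarrow> y \<in> B \<Longrightarrow> \<exists>z\<in>C. h z \<le> f x + g y"
  shows "(INF z\<in>C. h z) = (INF x\<in>A. f x) + (INF y\<in>B. g y)"
proof (rule antisym)
  have bdd: "bdd_below (h ` C)"
    using lower by (intro bdd_belowI2)
  have "(INF z\<in>C. h z) - g y \<le> f x" if xy: "x \<in> A" "y \<in> B" for x y
  proof -
    obtain z where "z \<in> C" "h z \<le> f x + g y"
      using upper[OF xy] by blast
    moreover from \<open>z \<in> C\<close> have "(INF z\<in>C. h z) \<le> h z"
      by (rule cINF_lower[OF bdd])
    ultimately show ?thesis
      by linarith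
  qed
  then have "(INF z\<in>C. h z) - g y \<le> (INF x\<in>A. f x)" if "y \<in> B" for y
    using that by (intro cINF_greatest[OF assms(1)])
  then have "(INF z\<in>C. h z) - (INF x\<in>A. f x) \<le> (INF y\<in>B. g y)"
    by (intro cINF_greatest[OF assms(2)]) (simp add: algebra_simps)
  then show "(INF z\<in>C. h z) \<le> (INF x\<in>A. f x) + (INF y\<in>B. g y)"
    by simp
  obtain x y where "x \<in> A" "y \<in> B" using assms(1,2) by blast
  then have "C \<noteq> {}" using upper by blast
  then show "(INF x\<in>A. f x) + (INF y\<in>B. g y) \<le> (INF z\<in>C. h z)"
    using lower by (rule cINF_greatest)
qed

theorem proposition1:
  fixes b lam mu cA cB :: real
    and XA YA :: "'a::finite \<Rightarrow> 'a \<Rightarrow> complex"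
    and XB YB :: "'b::finite \<Rightarrow> 'b \<Rightarrow> complex"
  assumes "b > 1"
    and "lam > 0" and "mu > 0"
    and "onb XA" and "onb YA" and "onb XB" and "onb YB"
    and hA: "\<forall>\<rho>::'a \<Rightarrow> 'a \<Rightarrow> complex. density \<rho> \<longrightarrow>
               lam * meas_entropy b XA \<rho> + mu * meas_entropy b YA \<rho> \<ge> cA"
    and hB: "\<forall>\<rho>::'b \<Rightarrow> 'b \<Rightarrow> complex. density \<rho> \<longrightarrow>
               lam * meas_entropy b XB \<rho> + mu * meas_entropy b YB \<rho> \<ge> cB"
  shows "(\<forall>\<rho>::('a \<times> 'b) \<Rightarrow> ('a \<times> 'b) \<Rightarrow> complex. density \<rho> \<longrightarrow>
            lam * meas_entropy b (tensor_basis XA XB) \<rho>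
              + mu * meas_entropy b (tensor_basis YA YB) \<rho> \<ge> cA + cB)
       \<and> ((cA = (INF \<rho>\<in>{\<rho>::'a \<Rightarrow> 'a \<Rightarrow> complex. density \<rho>}.
                   lam * meas_entropy b XA \<rho> + mu * meas_entropy b YA \<rho>)
          \<and> cB = (INF \<rho>\<in>{\<rho>::'b \<Rightarrow> 'b \<Rightarrow> complex. density \<rho>}.
                   lam * meas_entropy b XB \<rho> + mu * meas_entropy b YB \<rho>))
          \<longrightarrow> (INF \<rho>\<in>{\<rho>::('a \<times> 'b) \<Rightarrow> ('a \<times> 'b) \<Rightarrow> complex. density \<rho>}.
                 lam * meas_entropy b (tensor_basis XA XB) \<rho>
                   + mu * meas_entropy b (tensor_basis YA YB) \<rho>) = cA + cB)"
  (is "?bound \<and> (?optimal \<longrightarrow> ?infimum)")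
proof
  show bound: ?bound
    using entropic_uncertainty_tensor[OF assms] by blast
  show "?optimal \<longrightarrow> ?infimum"
  proof
    assume ?optimal
    then show ?infimum
    proof (elim conjE ssubst, intro INF_eq_add_INF)
      fix \<rho>A :: "'a \<Rightarrow> 'a \<Rightarrow> complex" and \<rho>B :: "'b \<Rightarrow> 'b \<Rightarrow> complex"
      assume "\<rho>A \<in> {\<rho>. density \<rho>}" "\<rho>B \<in> {\<rho>. density \<rho>}"
      then show "\<exists>\<rho>\<in>{\<rho>. density \<rho>}. lam * meas_entropy b (tensor_basis XA XB) \<rho>
                 + mu * meas_entropy b (tensor_basis YA YB) \<rho>
               \<le> lam * meas_entropy b XA \<rho>A + mu * meas_entropy b YA \<rho>A
                 + (lam * meas_entropy b XB \<rho>B + mu * meas_entropy b YB \<rho>B)"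
        using assms(4-7)
        by (intro bexI[of _ "tensor_op \<rho>A \<rho>B"]) (simp_all add: density_tensor_op meas_entropy_tensor_op algebra_simps)
    qed (use bound density_pure_state in auto)
  qed
qed

end
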